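(* Let $(E,\tau)$ be a locally solid vector lattice such that $\tau$ is metrisable and complete. Then $\tau$ is locally interval complete solidly submetrisable.
   Context: All vector lattices are real and Archimedean; linear topologies are Hausdorff. A locally solid topology on a vector lattice is a linear topology such that zero has a neighbourhood basis of solid sets. For $x\in E$, $B_x$ denotes the band generated by $x$. A locally solid topology $\tau$ on $E$ is locally interval complete solidly submetrisable if for every $x\in E^+$ there exists a metrisable locally solid topology $\widetilde\tau_x$ on $B_x$ such that (a) $\tau|_{B_x}$ is finer than $\widetilde\tau_x$, and (b) every $\widetilde\tau_x$-Cauchy sequence in the order interval $[0,x]$ is $\widetilde\tau_x$-convergent to an element of $[0,x]$. *)

theory Defs
  imports "HOL-Analysis.Analysis"
begin

definition vabs :: "'a::{ordered_real_vector,lattice} \<Rightarrow> 'a" where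
  "vabs x = sup x (- x)"

definition archimedean_vl :: "'a::{ordered_real_vector,lattice} itself \<Rightarrow> bool" where
  "archimedean_vl _ \<longleftrightarrow>
     (\<forall>x y::'a. 0 \<le> x \<and> (\<forall>n::nat. real n *\<^sub>R x \<le> y) \<longrightarrow> x = 0)"

definition solid_in :: "'a::{ordered_real_vector,lattice} set \<Rightarrow> 'a set \<Rightarrow> bool" where
  "solid_in S V \<longleftrightarrow> V \<subseteq> S \<and> (\<forall>x\<in>V. \<forall>y\<in>S. vabs y \<le> vabs x \<longrightarrow> y \<in> V)"

definition ideal_vl :: "'a::{ordered_real_vector,lattice} set \<Rightarrow> bool" where
  "ideal_vl I \<longleftrightarrow> 0 \<in> I \<and> (\<forall>x\<in>I. \<forall>y\<in>I. x + y \<in> I) \<and> (\<forall>a. \<forall>x\<in>I. a *\<^sub>R x \<in> I)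
     \<and> (\<forall>x\<in>I. \<forall>y. vabs y \<le> vabs x \<longrightarrow> y \<in> I)"

definition is_sup_vl :: "'a::{ordered_real_vector,lattice} set \<Rightarrow> 'a \<Rightarrow> bool" where
  "is_sup_vl D s \<longleftrightarrow> (\<forall>d\<in>D. d \<le> s) \<and> (\<forall>z. (\<forall>d\<in>D. d \<le> z) \<longrightarrow> s \<le> z)"

definition band_vl :: "'a::{ordered_real_vector,lattice} set \<Rightarrow> bool" where
  "band_vl B \<longleftrightarrow> ideal_vl B \<and> (\<forall>D s. D \<subseteq> B \<and> is_sup_vl D s \<longrightarrow> s \<in> B)"

definition band_gen :: "'a::{ordered_real_vector,lattice} \<Rightarrow> 'a set" where
  "band_gen x = \<Inter>{B. band_vl B \<and> x \<in> B}"

definition linear_topology_on :: "'a::real_vector set \<Rightarrow> 'a topology \<Rightarrow> bool" where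
  "linear_topology_on S T \<longleftrightarrow> topspace T = S \<and> Hausdorff_space T
     \<and> continuous_map (prod_topology T T) T (\<lambda>(x, y). x + y)
     \<and> continuous_map (prod_topology euclideanreal T) T (\<lambda>(a, x). a *\<^sub>R x)"

definition locally_solid_on :: "'a::{ordered_real_vector,lattice} set \<Rightarrow> 'a topology \<Rightarrow> bool" where
  "locally_solid_on S T \<longleftrightarrow> linear_topology_on S T \<and>
     (\<forall>U. (\<exists>W. openin T W \<and> 0 \<in> W \<and> W \<subseteq> U) \<longrightarrow>
        (\<exists>V. solid_in S V \<and> V \<subseteq> U \<and> (\<exists>W. openin T W \<and> 0 \<in> W \<and> W \<subseteq> V)))"

definition tvs_cauchy :: "'a::real_vector topology \<Rightarrow> (nat \<Rightarrow> 'a) \<Rightarrow> bool" where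
  "tvs_cauchy T f \<longleftrightarrow> (\<forall>n. f n \<in> topspace T) \<and>
     (\<forall>U. openin T U \<and> 0 \<in> U \<longrightarrow> (\<exists>N. \<forall>m n. N \<le> m \<and> N \<le> n \<longrightarrow> f m - f n \<in> U))"

definition tvs_complete :: "'a::real_vector topology \<Rightarrow> bool" where
  "tvs_complete T \<longleftrightarrow> (\<forall>f. tvs_cauchy T f \<longrightarrow> (\<exists>l. limitin T f l sequentially))"

definition lics_submetrisable :: "'a::{ordered_real_vector,lattice} topology \<Rightarrow> bool" where
  "lics_submetrisable T \<longleftrightarrow>
     (\<forall>x::'a. 0 \<le> x \<longrightarrow>
        (\<exists>Tx. locally_solid_on (band_gen x) Tx \<and> metrizable_space Tx
           \<and> (\<forall>U. openin Tx U \<longrightarrow> openin (subtopology T (band_gen x)) U)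
           \<and> (\<forall>f. (\<forall>n. f n \<in> {0..x}) \<and> tvs_cauchy Tx f \<longrightarrow>
                 (\<exists>l\<in>{0..x}. limitin Tx f l sequentially))))"

end

theory Submission
  imports Defs
begin

text \<open>The witness topology on \<open>B\<^sub>x\<close> is the restriction of \<open>\<tau>\<close> itself: it is
  metrisable because \<open>\<tau>\<close> is, and locally solid because \<open>B\<^sub>x\<close> is an ideal. In a
  Hausdorff locally solid topology order intervals are closed, so a Cauchy sequence in
  \<open>[0,x]\<close> converges in the complete space \<open>(E,\<tau>)\<close> to a limit that again lies in
  \<open>[0,x] \<subseteq> B\<^sub>x\<close>.\<close>

lemma vabs_eq_self:
  fixes x :: "'a::{ordered_real_vector,lattice}"
  assumes "0 \<le> x"
  shows "vabs x = x"
proof -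
  have "- x \<le> x" using assms by (meson neg_le_0_iff_le order_trans)
  then show ?thesis unfolding vabs_def by (simp add: sup_absorb1)
qed

lemma vabs_nonneg:
  fixes x :: "'a::{ordered_real_vector,lattice}"
  shows "0 \<le> vabs x"
proof -
  let ?s = "sup x (- x)"
  have "x + (- x) \<le> ?s + ?s" by (intro add_mono) auto
  then have "0 \<le> (1/2::real) *\<^sub>R (?s + ?s)"
    using scaleR_left_mono[of 0 "?s + ?s" "1/2"] by simp
  also have "(1/2::real) *\<^sub>R (?s + ?s) = ?s"
    by (simp add: scaleR_add_right flip: scaleR_add_left)
  finally show ?thesis unfolding vabs_def .
qed

lemma le_vabs:
  fixes x :: "'a::{ordered_real_vector,lattice}"
  shows "x \<le> vabs x" and "- x \<le> vabs x"
  unfolding vabs_def by auto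

lemma ideal_vl_band_gen: "ideal_vl (band_gen x)"
  unfolding ideal_vl_def band_gen_def band_vl_def by blast

lemma mem_band_gen: "x \<in> band_gen x"
  unfolding band_gen_def by blast

lemma ideal_vl_imp_subspace: "ideal_vl I \<Longrightarrow> subspace I"
  unfolding ideal_vl_def subspace_def by blast

lemma ideal_vl_interval_subset:
  fixes x :: "'a::{ordered_real_vector,lattice}"
  assumes "ideal_vl I" and "x \<in> I"
  shows "{0..x} \<subseteq> I"
proof
  fix y assume "y \<in> {0..x}"
  then have "0 \<le> y" "y \<le> x" by auto
  then have "vabs y \<le> vabs x" by (simp add: vabs_eq_self order_trans[of 0 y x])
  with assms show "y \<in> I" unfolding ideal_vl_def by blast
qed

lemma linear_topology_on_subtopology:
  fixes T :: "'a::real_vector topology"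
  assumes lin: "linear_topology_on S T" and L: "subspace L" and "L \<subseteq> S"
  shows "linear_topology_on L (subtopology T L)"
proof -
  have ts: "topspace T = S" and Haus: "Hausdorff_space T"
    and add: "continuous_map (prod_topology T T) T (\<lambda>(x, y). x + y)"
    and scale: "continuous_map (prod_topology euclideanreal T) T (\<lambda>(a, x). a *\<^sub>R x)"
    using lin unfolding linear_topology_on_def by auto
  have "continuous_map (subtopology (prod_topology T T) (L \<times> L)) (subtopology T L)
          (\<lambda>(x, y). x + y)"
    unfolding continuous_map_in_subtopology
    using continuous_map_from_subtopology[OF add] L by (auto simp: subspace_add)
  then have "continuous_map (prod_topology (subtopology T L) (subtopology T L)) (subtopology T L)
               (\<lambda>(x, y). x + y)"
    by (simp add: subtopology_Times)
  moreover have "continuous_map (subtopology (prod_topology euclideanreal T) (UNIV \<times> L))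
                   (subtopology T L) (\<lambda>(a, x). a *\<^sub>R x)"
    unfolding continuous_map_in_subtopology
    using continuous_map_from_subtopology[OF scale] L by (auto simp: subspace_scale)
  then have "continuous_map (prod_topology euclideanreal (subtopology T L)) (subtopology T L)
               (\<lambda>(a, x). a *\<^sub>R x)"
    by (simp add: subtopology_Times)
  ultimately show ?thesis
    using ts Haus \<open>L \<subseteq> S\<close> Hausdorff_space_subtopology
    unfolding linear_topology_on_def by (simp add: Int_absorb1)
qed

lemma locally_solid_on_subtopology:
  fixes T :: "'a::{ordered_real_vector,lattice} topology"
  assumes ls: "locally_solid_on S T" and I: "ideal_vl I" and "I \<subseteq> S"
  shows "locally_solid_on I (subtopology T I)"
  unfolding locally_solid_on_def
proof (intro conjI allI impI)
  show "linear_topology_on I (subtopology T I)"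
    using ls I \<open>I \<subseteq> S\<close> linear_topology_on_subtopology ideal_vl_imp_subspace
    unfolding locally_solid_on_def by blast
next
  fix U assume "\<exists>W. openin (subtopology T I) W \<and> 0 \<in> W \<and> W \<subseteq> U"
  then obtain W where W: "openin T W" "0 \<in> W" "W \<inter> I \<subseteq> U"
    by (auto simp: openin_subtopology)
  then have "\<exists>W'. openin T W' \<and> 0 \<in> W' \<and> W' \<subseteq> W" by blast
  then obtain V where V: "solid_in S V" "V \<subseteq> W" "\<exists>W'. openin T W' \<and> 0 \<in> W' \<and> W' \<subseteq> V"
    using ls unfolding locally_solid_on_def by blast
  then obtain W' where W': "openin T W'" "0 \<in> W'" "W' \<subseteq> V" by blast
  have "solid_in I (V \<inter> I)" using V(1) \<open>I \<subseteq> S\<close> unfolding solid_in_def by blast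
  moreover have "V \<inter> I \<subseteq> U" using V(2) W(3) by blast
  moreover have "openin (subtopology T I) (W' \<inter> I)" using W'(1) by (auto simp: openin_subtopology)
  moreover have "0 \<in> W' \<inter> I" using W'(2) I unfolding ideal_vl_def by blast
  moreover have "W' \<inter> I \<subseteq> V \<inter> I" using W'(3) by blast
  ultimately show "\<exists>V. solid_in I V \<and> V \<subseteq> U \<and>
                     (\<exists>W. openin (subtopology T I) W \<and> 0 \<in> W \<and> W \<subseteq> V)"
    by blast
qed

lemma tvs_cauchy_from_subtopology:
  assumes "tvs_cauchy (subtopology T L) f" and "0 \<in> L"
  shows "tvs_cauchy T f"
  unfolding tvs_cauchy_def
proof (intro conjI allI impI)
  show "f n \<in> topspace T" for n using assms(1) unfolding tvs_cauchy_def by simp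
next
  fix U assume "openin T U \<and> 0 \<in> U"
  then have "openin (subtopology T L) (U \<inter> L) \<and> 0 \<in> U \<inter> L"
    using \<open>0 \<in> L\<close> by (auto simp: openin_subtopology)
  then obtain N where "\<forall>m n. N \<le> m \<and> N \<le> n \<longrightarrow> f m - f n \<in> U \<inter> L"
    using assms(1) unfolding tvs_cauchy_def by blast
  then show "\<exists>N. \<forall>m n. N \<le> m \<and> N \<le> n \<longrightarrow> f m - f n \<in> U" by blast
qed

lemma locally_solid_translation_open:
  fixes T :: "'a::{ordered_real_vector,lattice} topology"
  assumes ls: "locally_solid_on UNIV T" and W: "openin T W"
  shows "openin T {y. y - l \<in> W}"
proof -
  have ts: "topspace T = UNIV" and add: "continuous_map (prod_topology T T) T (\<lambda>(x, y). x + y)"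
    using ls unfolding locally_solid_on_def linear_topology_on_def by auto
  have "continuous_map T (prod_topology T T) (\<lambda>y. (y, - l))"
    by (simp add: continuous_map_pairwise o_def ts)
  then have "continuous_map T T ((\<lambda>(x, y). x + y) \<circ> (\<lambda>y. (y, - l)))"
    using continuous_map_compose[OF _ add] by blast
  then have "continuous_map T T (\<lambda>y. y - l)" by (simp add: o_def)
  then show ?thesis using W ts by (simp add: continuous_map_def)
qed

text \<open>An element dominated by every \<open>|f n - l|\<close> lies in every solid neighbourhood of
  zero, hence is zero by the Hausdorff property.\<close>

lemma locally_solid_limit_dominated_zero:
  fixes T :: "'a::{ordered_real_vector,lattice} topology"
  assumes ls: "locally_solid_on UNIV T" and lim: "limitin T f l sequentially"
    and "0 \<le> z" and dom: "\<And>n. z \<le> vabs (f n - l)"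
  shows "z = 0"
proof (rule ccontr)
  assume "z \<noteq> 0"
  have "Hausdorff_space T" "topspace T = UNIV"
    using ls unfolding locally_solid_on_def linear_topology_on_def by auto
  then obtain U U' where U: "openin T U" "0 \<in> U" "z \<in> U'" "disjnt U U'"
    using \<open>z \<noteq> 0\<close> unfolding Hausdorff_space_def by (metis UNIV_I)
  then have "\<exists>W. openin T W \<and> 0 \<in> W \<and> W \<subseteq> U" by blast
  then obtain S where S: "solid_in UNIV S" "S \<subseteq> U" "\<exists>W. openin T W \<and> 0 \<in> W \<and> W \<subseteq> S"
    using ls unfolding locally_solid_on_def by blast
  then obtain W where W: "openin T W" "0 \<in> W" "W \<subseteq> S" by blast
  have "openin T {y. y - l \<in> W}" "l \<in> {y. y - l \<in> W}"
    using locally_solid_translation_open[OF ls W(1)] W(2) by auto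
  then have "eventually (\<lambda>n. f n \<in> {y. y - l \<in> W}) sequentially"
    using lim unfolding limitin_def by blast
  then obtain n where "f n - l \<in> S" using W(3) by (auto simp: eventually_sequentially)
  moreover have "vabs z \<le> vabs (f n - l)" using dom \<open>0 \<le> z\<close> by (simp add: vabs_eq_self)
  ultimately have "z \<in> U" using S(1,2) unfolding solid_in_def by blast
  then show False using U(3,4) by (auto simp: disjnt_def)
qed

lemma locally_solid_limit_in_interval:
  fixes T :: "'a::{ordered_real_vector,lattice} topology"
  assumes ls: "locally_solid_on UNIV T" and lim: "limitin T f l sequentially"
    and f: "\<And>n. f n \<in> {a..b}"
  shows "l \<in> {a..b}"
proof -
  have "sup (a - l) 0 = 0"
  proof (rule locally_solid_limit_dominated_zero[OF ls lim])
    fix n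
    have "a - l \<le> f n - l" using f by (simp add: diff_right_mono)
    then show "sup (a - l) 0 \<le> vabs (f n - l)"
      using le_vabs(1) vabs_nonneg by (metis le_sup_iff order_trans)
  qed simp
  moreover have "sup (l - b) 0 = 0"
  proof (rule locally_solid_limit_dominated_zero[OF ls lim])
    fix n
    have "l - b \<le> - (f n - l)" using f by (simp add: diff_left_mono)
    then show "sup (l - b) 0 \<le> vabs (f n - l)"
      using le_vabs(2) vabs_nonneg by (metis le_sup_iff order_trans)
  qed simp
  ultimately show ?thesis by (metis atLeastAtMost_iff diff_le_0_iff_le sup.cobounded1)
qed

lemma interval_complete_subtopology_ideal:
  fixes T :: "'a::{ordered_real_vector,lattice} topology"
  assumes ls: "locally_solid_on UNIV T" and "tvs_complete T"
    and I: "ideal_vl I" and "x \<in> I"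
    and f: "\<And>n. f n \<in> {0..x}" and cauchy: "tvs_cauchy (subtopology T I) f"
  shows "\<exists>l\<in>{0..x}. limitin (subtopology T I) f l sequentially"
proof -
  have "0 \<in> I" using I unfolding ideal_vl_def by blast
  with cauchy have "tvs_cauchy T f" by (rule tvs_cauchy_from_subtopology)
  then obtain l where l: "limitin T f l sequentially"
    using \<open>tvs_complete T\<close> unfolding tvs_complete_def by blast
  have "l \<in> {0..x}" using locally_solid_limit_in_interval[OF ls l f] .
  moreover have "{0..x} \<subseteq> I" using ideal_vl_interval_subset[OF I \<open>x \<in> I\<close>] .
  ultimately show ?thesis
    using l f by (intro bexI[of _ l]) (auto simp: limitin_subtopology subset_iff)
qed

theorem proposition3p8:
  fixes T :: "'a::{ordered_real_vector,lattice} topology"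
  assumes "archimedean_vl TYPE('a)"
    and "locally_solid_on UNIV T"
    and "metrizable_space T"
    and "tvs_complete T"
  shows "lics_submetrisable T"
  unfolding lics_submetrisable_def
proof (intro allI impI)
  fix x :: 'a
  let ?B = "band_gen x"
  have "locally_solid_on ?B (subtopology T ?B)"
    using assms(2) ideal_vl_band_gen by (rule locally_solid_on_subtopology) simp
  moreover have "metrizable_space (subtopology T ?B)"
    using assms(3) by (rule metrizable_space_subtopology)
  moreover have "\<exists>l\<in>{0..x}. limitin (subtopology T ?B) f l sequentially"
    if "\<forall>n. f n \<in> {0..x}" and "tvs_cauchy (subtopology T ?B) f" for f
    using interval_complete_subtopology_ideal[OF assms(2,4) ideal_vl_band_gen mem_band_gen] that
    by blast
  ultimately show "\<exists>Tx. locally_solid_on ?B Tx \<and> metrizable_space Tx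
      \<and> (\<forall>U. openin Tx U \<longrightarrow> openin (subtopology T ?B) U)
      \<and> (\<forall>f. (\<forall>n. f n \<in> {0..x}) \<and> tvs_cauchy Tx f \<longrightarrow>
            (\<exists>l\<in>{0..x}. limitin Tx f l sequentially))"
    by (intro exI[of _ "subtopology T ?B"]) blast
qed

end
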